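(* Consider a black-white array (BWA) currently storing $n$ values, i.e. with state variable $\mathtt{total}=n$, and suppose $n$ is $k$-trailed. Then inserting one more value into the BWA causes exactly $k$ recursive merges, namely $\mathrm{merge}(0),\mathrm{merge}(1),\dots,\mathrm{merge}(k-1)$.
   Context: A black-white array (BWA) of size $N=2^K$ stores values from a totally ordered set. It has a white array $W[1..N-1]$ and a black array $B[1..N/2-1]$. For $i\ge 0$, the segment of rank $i$ of either array is the block of indices $[2^i,2^{i+1}-1]$, so it has length $2^i$. An integer state variable $\mathtt{total}$ records the number of stored values and is initially $0$. The segment of rank $i$ is called active iff bit $i$ of $\mathtt{total}$ equals $1$ (bits counted from the least significant bit, which is bit $0$). Between operations, all stored values are held in the active white segments, and each active white segment is sorted in ascending order. Insert$(v)$: if the rank-0 segment is inactive, set $W[1]=v$; otherwise set $B[1]=v$ and perform $\mathrm{merge}(0)$. $\mathrm{merge}(i)$: merge the sorted white and black segments of rank $i$ by a standard two-way merge. If the rank-$(i+1)$ segment is inactive, the sorted result is written into the white segment of rank $i+1$. Otherwise it is written into the black segment of rank $i+1$, and then $\mathrm{merge}(i+1)$ is performed. When an insertion completes, $\mathtt{total}$ has increased by one. A nonnegative integer $n$ is $k$-trailed if its binary expansion has the form $[b_{m-1},\dots,b_{k+1},0,\underbrace{1,\dots,1}_{k}]$, i.e. its $k$ lowest bits are $1$ and bit $k$ is $0$. Every even number is $0$-trailed. *)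

theory Defs
  imports Main
begin

text \<open>State of a black-white array. Arrays are modelled as functions from indices
  to values; only indices 1..N-1 (white) and 1..N/2-1 (black) are ever touched.\<close>

record 'a bwa =
  tot :: nat
  W :: "nat \<Rightarrow> 'a"
  B :: "nat \<Rightarrow> 'a"

definition seg :: "nat \<Rightarrow> nat list" where
  "seg i = [2^i ..< 2^(i+1)]"

definition get_seg :: "(nat \<Rightarrow> 'a) \<Rightarrow> nat \<Rightarrow> 'a list" where
  "get_seg A i = map A (seg i)"

definition put_seg :: "(nat \<Rightarrow> 'a) \<Rightarrow> nat \<Rightarrow> 'a list \<Rightarrow> (nat \<Rightarrow> 'a)" where
  "put_seg A i xs = (\<lambda>j. if 2^i \<le> j \<and> j < 2^(i+1) then xs ! (j - 2^i) else A j)"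

definition active :: "'a bwa \<Rightarrow> nat \<Rightarrow> bool" where
  "active s i \<longleftrightarrow> bit (tot s) i"

fun merge2 :: "'a::linorder list \<Rightarrow> 'a list \<Rightarrow> 'a list" where
  "merge2 [] ys = ys"
| "merge2 xs [] = xs"
| "merge2 (x # xs) (y # ys) =
     (if x \<le> y then x # merge2 xs (y # ys) else y # merge2 (x # xs) ys)"

lemma bit_nat_less: "bit (n::nat) j \<Longrightarrow> j < n"
proof -
  assume h: "bit n j"
  have "2^j \<le> n"
  proof (rule ccontr)
    assume "\<not> 2^j \<le> n"
    hence "n div 2^j = 0" by simp
    with h show False by (simp add: bit_iff_odd)
  qed
  moreover have "j < 2^j" by simp
  ultimately show ?thesis by linarith
qed

text \<open>merge(i): returns the resulting state together with the trace of ranks of all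
  merge calls performed (in order), starting with i itself.\<close>
function merge_rec :: "nat \<Rightarrow> 'a::linorder bwa \<Rightarrow> 'a bwa \<times> nat list" where
  "merge_rec i s =
     (let m = merge2 (get_seg (W s) i) (get_seg (B s) i) in
      if active s (i+1) then
        (case merge_rec (i+1) (s\<lparr>B := put_seg (B s) (i+1) m\<rparr>) of
           (s', t) \<Rightarrow> (s', i # t))
      else (s\<lparr>W := put_seg (W s) (i+1) m\<rparr>, [i]))"
  by pat_completeness auto
termination
  by (relation "measure (\<lambda>(i, s). tot s - i)")
     (auto simp: active_def dest!: bit_nat_less)

definition bwa_insert :: "'a::linorder \<Rightarrow> 'a bwa \<Rightarrow> 'a bwa \<times> nat list" where
  "bwa_insert v s =
     (if \<not> active s 0 then (s\<lparr>W := (W s)(1 := v), tot := tot s + 1\<rparr>, [])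
      else (case merge_rec 0 (s\<lparr>B := (B s)(1 := v)\<rparr>) of
              (s', t) \<Rightarrow> (s'\<lparr>tot := tot s + 1\<rparr>, t)))"

definition bwa_valid :: "nat \<Rightarrow> 'a::linorder bwa \<Rightarrow> bool" where
  "bwa_valid K s \<longleftrightarrow> tot s \<le> 2^K - 1 \<and>
     (\<forall>i. active s i \<longrightarrow> sorted (get_seg (W s) i))"

definition k_trailed :: "nat \<Rightarrow> nat \<Rightarrow> bool" where
  "k_trailed k n \<longleftrightarrow> (\<forall>j<k. bit n j) \<and> \<not> bit n k"

end

theory Submission
  imports Defs
begin

(* A merge only rewrites the arrays, never tot, so whether merge(i) recurses is decided
   by bit i+1 of the original tot alone; the trace therefore runs through the block of
   consecutive 1-bits above i and stops at the first 0-bit. *)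

lemma merge_rec_trace:
  assumes "i < k" and "\<forall>j. i < j \<and> j < k \<longrightarrow> bit (tot s) j" and "\<not> bit (tot s) k"
  shows "snd (merge_rec i s) = [i..<k]"
  using assms
proof (induction i s rule: merge_rec.induct)
  case (1 i s)
  show ?case
  proof (cases "Suc i = k")
    case True
    from "1.prems" show ?thesis
      by (subst merge_rec.simps) (simp add: active_def Let_def del: merge_rec.simps flip: True)
  next
    case False
    let ?s' = "s\<lparr>B := put_seg (B s) (i+1) (merge2 (get_seg (W s) i) (get_seg (B s) i))\<rparr>"
    have active: "active s (i+1)"
      using "1.prems" False by (simp add: active_def)
    have "snd (merge_rec (i+1) ?s') = [i+1..<k]"
      using "1.prems" False active by (intro "1.IH") (auto simp del: merge_rec.simps)
    with active \<open>i < k\<close> show ?thesis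
      by (subst merge_rec.simps)
         (simp add: Let_def prod.case_eq_if upt_conv_Cons del: merge_rec.simps)
  qed
qed

lemma bwa_insert_trace:
  assumes "k_trailed k (tot s)"
  shows "snd (bwa_insert v s) = [0..<k]"
proof (cases k)
  case 0
  with assms show ?thesis
    by (simp add: bwa_insert_def active_def k_trailed_def)
next
  case (Suc d)
  with assms have "active s 0"
    by (simp add: active_def k_trailed_def)
  moreover have "snd (merge_rec 0 (s\<lparr>B := (B s)(1 := v)\<rparr>)) = [0..<k]"
    using assms Suc by (intro merge_rec_trace) (auto simp: k_trailed_def simp del: merge_rec.simps)
  ultimately show ?thesis
    by (simp add: bwa_insert_def prod.case_eq_if del: merge_rec.simps)
qed

theorem mainTheorem1:
  fixes s :: "'a::linorder bwa" and v :: 'a and K n k :: nat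
  assumes "bwa_valid K s"
    and "tot s = n"
    and "n + 1 \<le> 2^K - 1"
    and "k_trailed k n"
  shows "snd (bwa_insert v s) = [0..<k]"
proof (rule bwa_insert_trace)
  show "k_trailed k (tot s)"
    using assms(2,4) by simp
qed

end
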